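(* Let $\Gamma$ be a connected vacuum Feynman graph of the multi-orientable (MO) tensor model and let $\Gamma'_2$ be a two-point subgraph of $\Gamma$. Let $\Gamma/\Gamma'_2$ be the vacuum graph obtained from $\Gamma$ by replacing $\Gamma'_2$ with a single line, and let $\Gamma'$ be the vacuum graph obtained from $\Gamma'_2$ by joining its two external half-lines into one line. Then $$\omega(\Gamma)=\omega(\Gamma/\Gamma'_2)+\omega(\Gamma').$$
   Context: The MO tensor model concerns a complex tensor $\phi_{ijk}$, $i,j,k\in\{1,\dots,N\}$, with quadratic action $\sum_{ijk}\overline{\phi}_{ijk}\phi_{ijk}$ and quartic interaction $\lambda\sum \phi_{ijk}\overline{\phi}_{kj'i'}\phi_{k'ji'}\overline{\phi}_{k'j'i}$. Its Feynman graphs are stranded graphs built as follows. Each vertex has four half-lines $h_1,h_2,h_3,h_4$ in cyclic order, carrying $\phi_{ijk},\overline{\phi}_{kj'i'},\phi_{k'ji'},\overline{\phi}_{k'j'i}$ respectively; $h_1,h_3$ are labelled $+$ and $h_2,h_4$ are labelled $-$. Each half-line carries three strands (one per index slot), and inside a vertex two strands are joined when they carry the same index letter: $i$ joins $h_1,h_4$; $k$ joins $h_1,h_2$; $i'$ joins $h_2,h_3$; $k'$ joins $h_3,h_4$; $j$ joins $h_1,h_3$; $j'$ joins $h_2,h_4$. A line joins a $+$ half-line to a $-$ half-line, connecting the strands in the same index slot. A (connected) vacuum graph is a finite connected set of vertices all of whose half-lines are paired by lines; a two-point graph has exactly two unpaired (external) half-lines, one $+$ and one $-$. A two-point subgraph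 of a vacuum graph $\Gamma$ is a subgraph connected to the rest of $\Gamma$ by exactly two lines (which become its external half-lines). A face is a closed cycle formed by strands. Strands joining opposite half-lines ($h_1$–$h_3$ or $h_2$–$h_4$) are inner; the others are outer, and outer strands split into two types (those joining $h_1$–$h_2$ or $h_3$–$h_4$, and those joining $h_1$–$h_4$ or $h_2$–$h_3$); types are preserved along lines, so each face has one of three types. A jacket is the ribbon graph formed by the strands of two of the three types; it has genus $g_J=1-\frac12(F_J-L+V)\in\frac12\mathbb{N}$ (non-orientable jackets allowed), where $F_J$ is its number of faces, and $V,L=2V$ are the numbers of vertices and lines of the graph. The degree of a vacuum graph with $V$ vertices and $F$ faces is $\omega=\sum_J g_J=3+\frac32V-F$. *)

theory Defs
  imports Complex_Main
begin

text \<open>Half-lines of a vertex, in cyclic order h1,h2,h3,h4.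
  h1 carries phi_{ijk}, h2 carries phibar_{kj'i'}, h3 carries phi_{k'ji'},
  h4 carries phibar_{k'j'i}.\<close>
datatype hl = H1 | H2 | H3 | H4

text \<open>Index slots (strand families): the slot of the i-type index (i or i'),
  of the j-type index (j or j') and of the k-type index (k or k').\<close>
datatype slot = SI | SJ | SK

definition plus_hl :: "hl \<Rightarrow> bool" where
  "plus_hl h \<longleftrightarrow> h = H1 \<or> h = H3"

text \<open>Strand joins inside a vertex:
  i: h1-h4, i': h2-h3, j: h1-h3, j': h2-h4, k: h1-h2, k': h3-h4.\<close>
fun vpartner :: "slot \<Rightarrow> hl \<Rightarrow> hl" where
  "vpartner SI H1 = H4" | "vpartner SI H4 = H1" | "vpartner SI H2 = H3" | "vpartner SI H3 = H2"
| "vpartner SJ H1 = H3" | "vpartner SJ H3 = H1" | "vpartner SJ H2 = H4" | "vpartner SJ H4 = H2"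
| "vpartner SK H1 = H2" | "vpartner SK H2 = H1" | "vpartner SK H3 = H4" | "vpartner SK H4 = H3"

text \<open>A graph is given by its vertex set V and the line pairing L on half-lines
  (vertex, hl). Only the values of L on half-lines of V matter.\<close>

definition half_lines :: "'v set \<Rightarrow> ('v \<times> hl) set" where
  "half_lines V = V \<times> UNIV"

definition adj_rel :: "'v set \<Rightarrow> ('v \<times> hl \<Rightarrow> 'v \<times> hl) \<Rightarrow> ('v \<times> 'v) set" where
  "adj_rel V L = {(v, w). v \<in> V \<and> w \<in> V \<and> (\<exists>h h'. L (v, h) = (w, h'))}"

definition connected_graph :: "'v set \<Rightarrow> ('v \<times> hl \<Rightarrow> 'v \<times> hl) \<Rightarrow> bool" where
  "connected_graph V L \<longleftrightarrow> (\<forall>v\<in>V. \<forall>w\<in>V. (v, w) \<in> (adj_rel V L)\<^sup>*)"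

definition line_pairing :: "'v set \<Rightarrow> ('v \<times> hl \<Rightarrow> 'v \<times> hl) \<Rightarrow> bool" where
  "line_pairing V L \<longleftrightarrow>
     (\<forall>x\<in>half_lines V. L x \<in> half_lines V \<and> L x \<noteq> x \<and> L (L x) = x
        \<and> (plus_hl (snd x) \<longleftrightarrow> \<not> plus_hl (snd (L x))))"

definition vacuum_graph :: "'v set \<Rightarrow> ('v \<times> hl \<Rightarrow> 'v \<times> hl) \<Rightarrow> bool" where
  "vacuum_graph V L \<longleftrightarrow> finite V \<and> V \<noteq> {} \<and> line_pairing V L \<and> connected_graph V L"

definition strand_ends :: "'v set \<Rightarrow> ('v \<times> hl \<times> slot) set" where
  "strand_ends V = V \<times> UNIV \<times> UNIV"

definition strand_rel :: "'v set \<Rightarrow> ('v \<times> hl \<Rightarrow> 'v \<times> hl) \<Rightarrow> (('v \<times> hl \<times> slot) \<times> ('v \<times> hl \<times> slot)) set" where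
  "strand_rel V L = {((v, h, s), (w, h', s')). v \<in> V \<and> w \<in> V \<and> s' = s \<and>
      ((w = v \<and> h' = vpartner s h) \<or> L (v, h) = (w, h'))}"

definition faces :: "'v set \<Rightarrow> ('v \<times> hl \<Rightarrow> 'v \<times> hl) \<Rightarrow> ('v \<times> hl \<times> slot) set set" where
  "faces V L = strand_ends V // ((strand_rel V L)\<^sup>*)"

text \<open>Face types: j-strands are inner; k-strands (h1-h2, h3-h4) and i-strands
  (h1-h4, h2-h3) are the two outer types. The jacket omitting type t consists of
  the faces of the other two types.\<close>
definition jacket_faces :: "'v set \<Rightarrow> ('v \<times> hl \<Rightarrow> 'v \<times> hl) \<Rightarrow> slot \<Rightarrow> nat" where
  "jacket_faces V L t = card {f \<in> faces V L. \<exists>x\<in>f. snd (snd x) \<noteq> t}"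

definition jacket_genus :: "'v set \<Rightarrow> ('v \<times> hl \<Rightarrow> 'v \<times> hl) \<Rightarrow> slot \<Rightarrow> real" where
  "jacket_genus V L t = 1 - (real (jacket_faces V L t) - real (2 * card V) + real (card V)) / 2"

definition degree :: "'v set \<Rightarrow> ('v \<times> hl \<Rightarrow> 'v \<times> hl) \<Rightarrow> real" where
  "degree V L = (\<Sum>t\<in>UNIV. jacket_genus V L t)"

definition ext_half_lines :: "'v set \<Rightarrow> ('v \<times> hl \<Rightarrow> 'v \<times> hl) \<Rightarrow> ('v \<times> hl) set" where
  "ext_half_lines S L = {x \<in> half_lines S. fst (L x) \<notin> S}"

definition two_point_subgraph :: "'v set \<Rightarrow> ('v \<times> hl \<Rightarrow> 'v \<times> hl) \<Rightarrow> 'v set \<Rightarrow> bool" where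
  "two_point_subgraph V L S \<longleftrightarrow> S \<subseteq> V \<and> S \<noteq> {} \<and> connected_graph S L \<and>
     card (ext_half_lines S L) = 2 \<and>
     (\<exists>p m. ext_half_lines S L = {p, m} \<and> plus_hl (snd p) \<and> \<not> plus_hl (snd m))"

definition ext_plus :: "'v set \<Rightarrow> ('v \<times> hl \<Rightarrow> 'v \<times> hl) \<Rightarrow> 'v \<times> hl" where
  "ext_plus S L = (THE x. x \<in> ext_half_lines S L \<and> plus_hl (snd x))"

definition ext_minus :: "'v set \<Rightarrow> ('v \<times> hl \<Rightarrow> 'v \<times> hl) \<Rightarrow> 'v \<times> hl" where
  "ext_minus S L = (THE x. x \<in> ext_half_lines S L \<and> \<not> plus_hl (snd x))"

definition close_lines :: "'v set \<Rightarrow> ('v \<times> hl \<Rightarrow> 'v \<times> hl) \<Rightarrow> ('v \<times> hl \<Rightarrow> 'v \<times> hl)" where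
  "close_lines S L = (let p = ext_plus S L; m = ext_minus S L in
     (\<lambda>x. if x = p then m else if x = m then p else L x))"

definition contract_lines :: "'v set \<Rightarrow> ('v \<times> hl \<Rightarrow> 'v \<times> hl) \<Rightarrow> ('v \<times> hl \<Rightarrow> 'v \<times> hl)" where
  "contract_lines S L = (let p' = L (ext_plus S L); m' = L (ext_minus S L) in
     (\<lambda>x. if x = p' then m' else if x = m' then p' else L x))"

end

theory Submission
  imports Defs
begin

text \<open>
  Summing the three jacket genera gives \<open>\<omega> = 3 + 3V/2 - F\<close>, and the vertices of \<open>\<Gamma>\<close> are shared
  out between the two pieces, so it suffices to show \<open>F(\<Gamma>) + 3 = F(\<Gamma>') + F(\<Gamma>/\<Gamma>'\<^sub>2)\<close>.
  In a part of a graph with only two external half-lines, the open strand entering at one of them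
  leaves through the other one, in the same slot: the strand class of an end is closed under the
  vertex involution, so has even size, whereas with its starting end removed it would be closed under
  following lines, and so have even size too, if the strand did not reach the other external half-line. Hence closing either piece
  by a line creates no new face: the faces of each piece are the classes of its open strands.
  Gluing the pieces back together along the two cut lines, the first line joins in each of the three
  slots two classes on different sides of the cut, which lowers the number of faces by three, and the
  second line only closes faces that already exist.
\<close>

section \<open>Relations and their equivalence classes\<close>

lemma rtrancl_invariant:
  assumes "(x, y) \<in> R\<^sup>*" and "\<And>u v. (u, v) \<in> R \<Longrightarrow> f u = f v"
  shows "f x = f y"
  using assms by (induction rule: rtrancl_induct) auto

lemma rtrancl_closed: "(x, y) \<in> R\<^sup>* \<Longrightarrow> R `` A \<subseteq> A \<Longrightarrow> x \<in> A \<Longrightarrow> y \<in> A"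
  by (induction rule: rtrancl_induct) auto

lemma rtrancl_Un_disjoint_left:
  assumes "(x, y) \<in> (P \<union> Q)\<^sup>*" "x \<in> C" "P \<subseteq> C \<times> C" "Q \<subseteq> D \<times> D" "C \<inter> D = {}"
  shows "(x, y) \<in> P\<^sup>*"
  using assms(1) by (rule rtrancl_Un_separatorE) (use assms(2-) rtrancl_closed[of x _ P C] in blast)

lemma rtrancl_add_sym_edge:
  "(R \<union> {(a, b), (b, a)})\<^sup>* =
    R\<^sup>* \<union> {(x, y). (x, a) \<in> R\<^sup>* \<and> (b, y) \<in> R\<^sup>*} \<union> {(x, y). (x, b) \<in> R\<^sup>* \<and> (a, y) \<in> R\<^sup>*}"
proof -
  have "R \<union> {(a, b), (b, a)} = insert (a, b) (insert (b, a) R)"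
    by blast
  then show ?thesis
    by (simp only: rtrancl_insert) (blast intro: rtrancl_trans)
qed

lemma even_card_involution:
  assumes "finite C"
    and "\<And>x. x \<in> C \<Longrightarrow> f x \<in> C" "\<And>x. x \<in> C \<Longrightarrow> f x \<noteq> x" "\<And>x. x \<in> C \<Longrightarrow> f (f x) = x"
  shows "even (card C)"
  using assms
proof (induction "card C" arbitrary: C rule: less_induct)
  case less
  show ?case
  proof (cases "C = {}")
    case False
    then obtain x where x: "x \<in> C" by auto
    let ?C' = "C - {x, f x}"
    have "f x \<in> C" "f x \<noteq> x"
      using less.prems x by auto
    then have "card ?C' = card C - 2" "card ?C' < card C" "2 \<le> card C"
      using less.prems(1) x card_mono[OF less.prems(1), of "{x, f x}"]
      by (auto simp: card_Diff_subset)
    moreover have "even (card ?C')"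
    proof (rule less.hyps)
      show "f y \<in> ?C'" if "y \<in> ?C'" for y
        using less.prems that x by (metis Diff_iff insertCI insertE singletonD)
    qed (use less.prems \<open>card ?C' < card C\<close> in auto)
    ultimately show ?thesis by presburger
  qed simp
qed

lemma card_quotient_Un_disjoint:
  assumes "A \<inter> B = {}" "RA \<subseteq> A \<times> A" "RB \<subseteq> B \<times> B" "finite A" "finite B"
  shows "card ((A \<union> B) // (RA \<union> RB)\<^sup>*) = card (A // RA\<^sup>*) + card (B // RB\<^sup>*)"
proof -
  have "B \<inter> A = {}"
    using assms(1) by blast
  have "(RA \<union> RB)\<^sup>* `` {x} = RA\<^sup>* `` {x}" if "x \<in> A" for x
    using rtrancl_Un_disjoint_left[OF _ that assms(2,3,1)] rtrancl_mono[of RA "RA \<union> RB"] by auto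
  moreover have "(RA \<union> RB)\<^sup>* `` {x} = RB\<^sup>* `` {x}" if "x \<in> B" for x
    using rtrancl_Un_disjoint_left[of _ _ RB RA, OF _ that assms(3,2) \<open>B \<inter> A = {}\<close>, unfolded Un_commute[of RB]]
      rtrancl_mono[of RB "RA \<union> RB"] by auto
  ultimately have "(A \<union> B) // (RA \<union> RB)\<^sup>* = A // RA\<^sup>* \<union> B // RB\<^sup>*"
    unfolding quotient_def by auto
  moreover have "A // RA\<^sup>* \<inter> B // RB\<^sup>* = {}"
  proof -
    have "RA\<^sup>* `` {x} \<subseteq> A" if "x \<in> A" for x
      using rtrancl_closed[of x _ RA A] assms(2) that by blast
    moreover have "x \<in> RB\<^sup>* `` {x}" for x
      by blast
    ultimately show ?thesis
      using assms(1) unfolding quotient_def by blast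
  qed
  moreover have "finite (A // RA\<^sup>*)" "finite (B // RB\<^sup>*)"
    using assms(4,5) unfolding quotient_def by auto
  ultimately show ?thesis
    by (simp add: card_Un_disjoint)
qed

lemma card_quotient_add_edge:
  assumes "finite X" "sym R" "a \<in> X" "b \<in> X" "(a, b) \<notin> R\<^sup>*"
  shows "card (X // (R \<union> {(a, b), (b, a)})\<^sup>*) + 1 = card (X // R\<^sup>*)"
proof -
  let ?r = "R\<^sup>*" and ?A = "R\<^sup>* `` {a}" and ?B = "R\<^sup>* `` {b}"
  have "equiv UNIV ?r"
    using assms(2) by (simp add: equiv_def refl_rtrancl sym_rtrancl trans_rtrancl)
  then have cls: "?r `` {x} = ?r `` {y} \<longleftrightarrow> (x, y) \<in> ?r" for x y
    using eq_equiv_class_iff[of UNIV ?r x y] by simp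
  define merge where "merge C = (if C \<in> {?A, ?B} then ?A \<union> ?B else C)" for C
  have "(R \<union> {(a, b), (b, a)})\<^sup>* `` {x} = merge (?r `` {x})" for x
  proof -
    have "(R \<union> {(a, b), (b, a)})\<^sup>* `` {x} =
        ?r `` {x} \<union> (if (x, a) \<in> ?r then ?B else {}) \<union> (if (x, b) \<in> ?r then ?A else {})"
      unfolding rtrancl_add_sym_edge by auto
    moreover have "\<not> ((x, a) \<in> ?r \<and> (x, b) \<in> ?r)"
      using cls assms(5) by blast
    ultimately show ?thesis
      unfolding merge_def using cls by auto
  qed
  then have "X // (R \<union> {(a, b), (b, a)})\<^sup>* = merge ` (X // ?r)"
    unfolding quotient_def by auto
  also have "\<dots> = insert (?A \<union> ?B) (X // ?r - {?A, ?B})"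
    using quotientI[OF assms(3), of ?r] by (auto simp: merge_def)
  finally have "card (X // (R \<union> {(a, b), (b, a)})\<^sup>*) = card (X // ?r - {?A, ?B}) + 1"
  proof (simp, intro card_insert_disjoint notI)
    show "finite (X // ?r - {?A, ?B})"
      using assms(1) unfolding quotient_def by simp
  next
    assume "?A \<union> ?B \<in> X // ?r - {?A, ?B}"
    then obtain x where "?A \<union> ?B = ?r `` {x}" "?r `` {x} \<noteq> ?A"
      unfolding quotient_def by auto
    then show False
      using cls by blast
  qed
  moreover have "card (X // ?r - {?A, ?B}) + 2 = card (X // ?r)"
  proof -
    have fin: "finite (X // ?r)" and sub: "{?A, ?B} \<subseteq> X // ?r"
      using assms(1,3,4) unfolding quotient_def by auto
    moreover have "card {?A, ?B} = 2"
      using cls assms(5) by auto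
    ultimately show ?thesis
      using card_Diff_subset[OF _ sub] card_mono[OF fin sub] by simp
  qed
  ultimately show ?thesis
    by simp
qed

(* side i is a cut respected by everything except bridge i, so each bridge merges two
   distinct classes. *)
lemma card_quotient_add_bridges:
  fixes a b :: "'i \<Rightarrow> 'a" and side :: "'i \<Rightarrow> 'a \<Rightarrow> bool"
  assumes "finite X" "finite I" "sym R"
    and "\<And>i. i \<in> I \<Longrightarrow> a i \<in> X" "\<And>i. i \<in> I \<Longrightarrow> b i \<in> X"
    and "\<And>i x y. i \<in> I \<Longrightarrow> (x, y) \<in> R \<Longrightarrow> side i x = side i y"
    and "\<And>i j. i \<in> I \<Longrightarrow> j \<in> I \<Longrightarrow> j \<noteq> i \<Longrightarrow> side i (a j) = side i (b j)"
    and "\<And>i. i \<in> I \<Longrightarrow> side i (a i) \<noteq> side i (b i)"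
  shows "card (X // (R \<union> (\<Union>i\<in>I. {(a i, b i), (b i, a i)}))\<^sup>*) + card I = card (X // R\<^sup>*)"
  using assms(2,4-)
proof (induction I rule: finite_induct)
  case (insert i I)
  let ?R = "R \<union> (\<Union>j\<in>I. {(a j, b j), (b j, a j)})"
  have "sym ?R"
    using assms(3) unfolding sym_def by blast
  moreover have "(a i, b i) \<notin> ?R\<^sup>*"
  proof
    assume "(a i, b i) \<in> ?R\<^sup>*"
    then have "side i (a i) = side i (b i)"
    proof (rule rtrancl_invariant)
      have "side i (a j) = side i (b j)" if "j \<in> I" for j
        using that insert.hyps(2) insert.prems(4) by blast
      then show "side i x = side i y" if "(x, y) \<in> ?R" for x y
        using that insert.prems(3) by auto
    qed
    with insert.prems(5)[of i] show False by simp
  qed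
  ultimately have "card (X // (?R \<union> {(a i, b i), (b i, a i)})\<^sup>*) + 1 = card (X // ?R\<^sup>*)"
    using card_quotient_add_edge[OF assms(1)] insert.prems(1,2) by blast
  moreover have "?R \<union> {(a i, b i), (b i, a i)} = R \<union> (\<Union>j\<in>insert i I. {(a j, b j), (b j, a j)})"
    by auto
  ultimately show ?case
    using insert by simp
qed simp


section \<open>Strands, faces and the degree\<close>

lemma UNIV_hl: "(UNIV :: hl set) = {H1, H2, H3, H4}"
  using hl.exhaust by auto

lemma UNIV_slot: "(UNIV :: slot set) = {SI, SJ, SK}"
  using slot.exhaust by auto

lemma in_half_lines_iff [simp]: "x \<in> half_lines T \<longleftrightarrow> fst x \<in> T"
  by (cases x) (simp add: half_lines_def)

lemma in_strand_ends_iff [simp]: "x \<in> strand_ends T \<longleftrightarrow> fst x \<in> T"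
  by (cases x) (simp add: strand_ends_def)

abbreviation strand :: "'v \<times> hl \<Rightarrow> slot \<Rightarrow> 'v \<times> hl \<times> slot" where
  "strand x s \<equiv> (fst x, snd x, s)"

lemma vpartner_vpartner [simp]: "vpartner s (vpartner s h) = h"
  by (cases s; cases h) auto

lemma vpartner_neq [simp]: "vpartner s h \<noteq> h"
  by (cases s; cases h) auto

lemma strand_rel_rtrancl_slot:
  "(x, y) \<in> (strand_rel V L)\<^sup>* \<Longrightarrow> snd (snd x) = snd (snd y)"
  by (erule rtrancl_invariant) (auto simp: strand_rel_def)

lemma strand_rel_subset: "strand_rel T L \<subseteq> strand_ends T \<times> strand_ends T"
  by (auto simp: strand_rel_def)

lemma strand_class_subset:
  "x \<in> strand_ends T \<Longrightarrow> (strand_rel T L)\<^sup>* `` {x} \<subseteq> strand_ends T"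
  using rtrancl_closed[of x _ "strand_rel T L" "strand_ends T"] strand_rel_subset by blast

lemma strand_rel_sym:
  assumes "\<And>x. x \<in> half_lines T \<Longrightarrow> L (L x) = x"
  shows "sym (strand_rel T L)"
proof (rule symI)
  fix x y assume "(x, y) \<in> strand_rel T L"
  then show "(y, x) \<in> strand_rel T L"
    using assms[of "(fst x, fst (snd x))"] unfolding strand_rel_def by auto
qed

lemma finite_strand_ends: "finite V \<Longrightarrow> finite (strand_ends V)"
  by (simp add: strand_ends_def UNIV_hl UNIV_slot)

lemma even_card_strand_class:
  assumes "finite T" "x \<in> strand_ends T"
  shows "even (card ((strand_rel T L)\<^sup>* `` {x}))"
proof (rule even_card_involution)
  let ?C = "(strand_rel T L)\<^sup>* `` {x}" and ?flip = "\<lambda>(v, h, s). (v, vpartner s h, s)"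
  show "finite ?C"
    using assms finite_strand_ends finite_subset strand_class_subset by metis
  show "?flip y \<in> ?C" if "y \<in> ?C" for y
  proof -
    have "fst y \<in> T"
      using subsetD[OF strand_class_subset[OF assms(2)] that] by simp
    then have "(y, ?flip y) \<in> strand_rel T L"
      by (cases y) (simp add: strand_rel_def)
    then show ?thesis
      using that by (auto intro: rtrancl_into_rtrancl)
  qed
qed auto

lemma finite_faces: "finite V \<Longrightarrow> finite (faces V L)"
  unfolding faces_def quotient_def by (simp add: finite_strand_ends)

lemma face_slot:
  assumes "f \<in> faces V L"
  obtains s where "f \<noteq> {}" and "\<And>x. x \<in> f \<Longrightarrow> snd (snd x) = s"
proof -
  obtain x where "f = (strand_rel V L)\<^sup>* `` {x}"
    using assms unfolding faces_def by (auto elim: quotientE)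
  then show thesis
    using that[of "snd (snd x)"] strand_rel_rtrancl_slot by fastforce
qed

lemma sum_jacket_faces:
  assumes "finite V"
  shows "(\<Sum>t\<in>UNIV. jacket_faces V L t) = 2 * card (faces V L)"
proof -
  have two: "(\<Sum>t\<in>UNIV. if \<exists>x\<in>f. snd (snd x) \<noteq> t then 1 else 0) = (2::nat)"
    if f: "f \<in> faces V L" for f
  proof -
    obtain s where "f \<noteq> {}" and "\<And>x. x \<in> f \<Longrightarrow> snd (snd x) = s"
      using face_slot[OF f] by metis
    then have "(\<exists>x\<in>f. snd (snd x) \<noteq> t) \<longleftrightarrow> s \<noteq> t" for t by blast
    then show ?thesis by (cases s) (simp_all add: UNIV_slot)
  qed
  have "(\<Sum>t\<in>UNIV. jacket_faces V L t)
      = (\<Sum>t\<in>UNIV. \<Sum>f\<in>faces V L. if \<exists>x\<in>f. snd (snd x) \<noteq> t then 1 else 0)"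
    unfolding jacket_faces_def using assms by (simp add: finite_faces sum.If_cases Int_def)
  also have "\<dots> = (\<Sum>f\<in>faces V L. \<Sum>t\<in>UNIV. if \<exists>x\<in>f. snd (snd x) \<noteq> t then 1 else 0)"
    by (rule sum.swap)
  also have "\<dots> = 2 * card (faces V L)"
    using two by simp
  finally show ?thesis .
qed

lemma degree_eq_faces:
  assumes "finite V"
  shows "degree V L = 3 + 3 / 2 * real (card V) - real (card (faces V L))"
proof -
  have "real (jacket_faces V L SI) + real (jacket_faces V L SJ) + real (jacket_faces V L SK)
      = 2 * real (card (faces V L))"
    using sum_jacket_faces[OF assms, of L] unfolding UNIV_slot by (simp flip: of_nat_add)
  then show ?thesis
    unfolding degree_def jacket_genus_def UNIV_slot by (simp add: field_simps)
qed


section \<open>Two-point parts\<close>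

locale two_point_part =
  fixes T :: "'v set" and L :: "'v \<times> hl \<Rightarrow> 'v \<times> hl" and a b :: "'v \<times> hl"
  assumes finite_part: "finite T"
    and line_involutive: "\<And>x. x \<in> half_lines T \<Longrightarrow> L (L x) = x"
    and line_no_fixpoint: "\<And>x. x \<in> half_lines T \<Longrightarrow> L x \<noteq> x"
    and external_iff: "\<And>x. x \<in> half_lines T \<Longrightarrow> fst (L x) \<notin> T \<longleftrightarrow> x = a \<or> x = b"
    and a_half_line: "a \<in> half_lines T"
    and b_half_line: "b \<in> half_lines T"
begin

lemma swap: "two_point_part T L b a"
  by unfold_locales (use finite_part line_involutive line_no_fixpoint external_iff
      a_half_line b_half_line in auto)

lemma even_card_class_minus_external:
  assumes "(strand a s, strand b s) \<notin> (strand_rel T L)\<^sup>*"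
  shows "even (card ((strand_rel T L)\<^sup>* `` {strand a s} - {strand a s}))"
proof -
  let ?C = "(strand_rel T L)\<^sup>* `` {strand a s}"
  let ?along = "\<lambda>(v, h, t). strand (L (v, h)) t"
  have C_ends: "?C \<subseteq> strand_ends T"
    using a_half_line by (intro strand_class_subset) auto
  have "finite (?C - {strand a s})"
    using C_ends finite_part finite_strand_ends finite_subset by blast
  moreover have "?along y \<in> ?C - {strand a s} \<and> ?along y \<noteq> y \<and> ?along (?along y) = y"
    if y: "y \<in> ?C - {strand a s}" for y
  proof -
    obtain v h t where y_eq [simp]: "y = (v, h, t)"
      by (cases y)
    have vh: "(v, h) \<in> half_lines T"
      using y C_ends by auto
    have "t = s"
      using y strand_rel_rtrancl_slot by fastforce
    then have "(v, h) \<noteq> a" "(v, h) \<noteq> b"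
      using y assms by auto
    then have "(y, ?along y) \<in> strand_rel T L"
      using vh external_iff[OF vh] by (auto simp: strand_rel_def)
    moreover have "L (v, h) \<noteq> a"
      using external_iff[OF a_half_line] line_involutive[OF vh] vh by auto
    ultimately show ?thesis
      using y line_no_fixpoint[OF vh] line_involutive[OF vh]
      by (auto intro: rtrancl_into_rtrancl simp: prod_eq_iff)
  qed
  ultimately show ?thesis
    by (intro even_card_involution[of _ ?along]) blast+
qed

lemma external_strands_connected: "(strand a s, strand b s) \<in> (strand_rel T L)\<^sup>*"
proof (rule ccontr)
  let ?C = "(strand_rel T L)\<^sup>* `` {strand a s}"
  assume "(strand a s, strand b s) \<notin> (strand_rel T L)\<^sup>*"
  then have "even (card (?C - {strand a s}))"
    by (rule even_card_class_minus_external)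
  moreover have "even (card ?C)"
    using finite_part a_half_line by (intro even_card_strand_class) auto
  moreover have "finite ?C" "strand a s \<in> ?C"
    using finite_part a_half_line strand_class_subset[of "strand a s" T L]
      finite_subset[OF _ finite_strand_ends] by auto
  ultimately show False
    by (simp add: card_Diff_singleton)
qed

lemma faces_rejoin: "faces T (L(a := b, b := a)) = strand_ends T // (strand_rel T L)\<^sup>*"
proof -
  let ?R = "strand_rel T L"
  have "?R \<subseteq> strand_rel T (L(a := b, b := a))"
  proof (rule subrelI)
    fix x y assume "(x, y) \<in> ?R"
    moreover have "(fst x, fst (snd x)) \<noteq> a" "(fst x, fst (snd x)) \<noteq> b"
      if "L (fst x, fst (snd x)) = (fst y, fst (snd y))" "fst y \<in> T" "fst x \<in> T"
      using that external_iff[of "(fst x, fst (snd x))"] by auto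
    ultimately show "(x, y) \<in> strand_rel T (L(a := b, b := a))"
      unfolding strand_rel_def by auto
  qed
  moreover have "strand_rel T (L(a := b, b := a)) \<subseteq> ?R\<^sup>*"
  proof (rule subrelI)
    fix x y assume xy: "(x, y) \<in> strand_rel T (L(a := b, b := a))"
    have "(strand a s, strand b s) \<in> ?R\<^sup>*" "(strand b s, strand a s) \<in> ?R\<^sup>*" for s
      using external_strands_connected two_point_part.external_strands_connected[OF swap] .
    with xy show "(x, y) \<in> ?R\<^sup>*"
      unfolding strand_rel_def by (auto split: if_splits)
  qed
  ultimately show ?thesis
    unfolding faces_def by (simp add: rtrancl_subset)
qed

end


section \<open>Cutting a graph along a two-point subgraph\<close>

locale two_point_cut =
  fixes V S :: "'v set" and L :: "'v \<times> hl \<Rightarrow> 'v \<times> hl" and p m :: "'v \<times> hl"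
  assumes finite_graph: "finite V"
    and pairing: "line_pairing V L"
    and part_subset: "S \<subseteq> V"
    and external: "ext_half_lines S L = {p, m}"
begin

lemma line_in: "fst x \<in> V \<Longrightarrow> fst (L x) \<in> V"
  and line_neq: "fst x \<in> V \<Longrightarrow> L x \<noteq> x"
  and line_line: "fst x \<in> V \<Longrightarrow> L (L x) = x"
  using pairing by (auto simp: line_pairing_def)

lemma external_iff:
  assumes "fst x \<in> S"
  shows "fst (L x) \<notin> S \<longleftrightarrow> x = p \<or> x = m"
proof -
  have "x \<in> ext_half_lines S L \<longleftrightarrow> x = p \<or> x = m"
    using external by simp
  then show ?thesis
    using assms unfolding ext_half_lines_def by simp
qed

lemma external_in: "fst p \<in> S" "fst m \<in> S" "fst (L p) \<in> V - S" "fst (L m) \<in> V - S"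
proof -
  have "p \<in> ext_half_lines S L" "m \<in> ext_half_lines S L"
    using external by simp_all
  then show "fst p \<in> S" "fst m \<in> S" "fst (L p) \<in> V - S" "fst (L m) \<in> V - S"
    using part_subset line_in[of p] line_in[of m] unfolding ext_half_lines_def by auto
qed

lemma line_line_external: "L (L p) = p" "L (L m) = m"
  using external_in part_subset line_line[of p] line_line[of m] by auto

sublocale inside: two_point_part S L p m
proof
  show "finite S"
    using finite_graph part_subset finite_subset by blast
  show "L (L x) = x" "L x \<noteq> x" if "x \<in> half_lines S" for x
    using that part_subset line_line[of x] line_neq[of x] by auto
  show "fst (L x) \<notin> S \<longleftrightarrow> x = p \<or> x = m" if "x \<in> half_lines S" for x
    using that external_iff[of x] by simp
  show "p \<in> half_lines S" "m \<in> half_lines S"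
    using external_in by simp_all
qed

sublocale outside: two_point_part "V - S" L "L p" "L m"
proof
  show "finite (V - S)"
    using finite_graph by blast
  show "L (L x) = x" "L x \<noteq> x" if "x \<in> half_lines (V - S)" for x
    using that line_line[of x] line_neq[of x] by auto
  show "fst (L x) \<notin> V - S \<longleftrightarrow> x = L p \<or> x = L m" if "x \<in> half_lines (V - S)" for x
  proof -
    have "fst (L x) \<in> V" "L (L x) = x"
      using that line_in[of x] line_line[of x] by auto
    then have "fst (L x) \<notin> V - S \<longleftrightarrow> L x = p \<or> L x = m"
      using that external_iff[of "L x"] external_in by auto
    also have "\<dots> \<longleftrightarrow> x = L p \<or> x = L m"
      using \<open>L (L x) = x\<close> line_line_external by auto
    finally show ?thesis .
  qed
  show "L p \<in> half_lines (V - S)" "L m \<in> half_lines (V - S)"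
    using external_in by simp_all
qed

definition cut_line_strands :: "(('v \<times> hl \<times> slot) \<times> ('v \<times> hl \<times> slot)) set" where
  "cut_line_strands = (\<Union>s. {(strand p s, strand (L p) s), (strand (L p) s, strand p s)})"

(* The strands along the other cut line, at m, are already connected through the two parts. *)
lemma rtrancl_strand_rel_cut:
  "(strand_rel V L)\<^sup>* = (strand_rel S L \<union> strand_rel (V - S) L \<union> cut_line_strands)\<^sup>*"
proof (rule rtrancl_subset)
  let ?R = "strand_rel S L \<union> strand_rel (V - S) L \<union> cut_line_strands"
  show "?R \<subseteq> strand_rel V L"
    using part_subset external_in line_line_external
    by (auto simp: strand_rel_def cut_line_strands_def)
  have crossing: "(strand x s, strand (L x) s) \<in> ?R\<^sup>* \<and> (strand (L x) s, strand x s) \<in> ?R\<^sup>*"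
    if "fst x \<in> S" "fst (L x) \<notin> S" for x s
  proof -
    have "(strand p s, strand m s) \<in> ?R\<^sup>*" "(strand m s, strand p s) \<in> ?R\<^sup>*"
      using inside.external_strands_connected two_point_part.external_strands_connected[OF inside.swap]
        rtrancl_mono[of "strand_rel S L" ?R] by blast+
    moreover have "(strand (L p) s, strand (L m) s) \<in> ?R\<^sup>*" "(strand (L m) s, strand (L p) s) \<in> ?R\<^sup>*"
      using outside.external_strands_connected two_point_part.external_strands_connected[OF outside.swap]
        rtrancl_mono[of "strand_rel (V - S) L" ?R] by blast+
    moreover have "(strand p s, strand (L p) s) \<in> ?R\<^sup>*" "(strand (L p) s, strand p s) \<in> ?R\<^sup>*"
      by (auto simp: cut_line_strands_def)
    moreover have "x = p \<or> x = m"
      using that external_iff by blast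
    ultimately show ?thesis
      by (meson rtrancl_trans)
  qed
  show "strand_rel V L \<subseteq> ?R\<^sup>*"
  proof (rule subrelI)
    fix x y assume xy: "(x, y) \<in> strand_rel V L"
    then obtain v h w h' s where eqs: "x = (v, h, s)" "y = (w, h', s)" and "v \<in> V" "w \<in> V"
      and link: "(w = v \<and> h' = vpartner s h) \<or> L (v, h) = (w, h')"
      unfolding strand_rel_def by auto
    consider "v \<in> S \<longleftrightarrow> w \<in> S" | "v \<in> S" "w \<notin> S" | "v \<notin> S" "w \<in> S"
      by blast
    then show "(x, y) \<in> ?R\<^sup>*"
    proof cases
      case 1
      then have "(x, y) \<in> ?R"
        using xy eqs \<open>v \<in> V\<close> \<open>w \<in> V\<close> unfolding strand_rel_def by auto
      then show ?thesis by blast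
    next
      case 2
      then show ?thesis
        using link crossing[of "(v, h)" s] eqs by auto
    next
      case 3
      then have "L (w, h') = (v, h)"
        using link line_line[of "(v, h)"] \<open>v \<in> V\<close> by auto
      then show ?thesis
        using 3 crossing[of "(w, h')" s] eqs by auto
    qed
  qed
qed

lemma card_faces_cut:
  "card (faces V L) + 3 =
    card (strand_ends S // (strand_rel S L)\<^sup>*) + card (strand_ends (V - S) // (strand_rel (V - S) L)\<^sup>*)"
proof -
  let ?RA = "strand_rel S L" and ?RB = "strand_rel (V - S) L"
  have ends: "strand_ends V = strand_ends S \<union> strand_ends (V - S)"
    using part_subset by auto
  have "card (faces V L) + card (UNIV :: slot set) = card (strand_ends V // (?RA \<union> ?RB)\<^sup>*)"
    unfolding faces_def rtrancl_strand_rel_cut cut_line_strands_def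
  proof (rule card_quotient_add_bridges[where side = "\<lambda>s x. snd (snd x) = s \<and> fst x \<in> S"])
    show "finite (strand_ends V)"
      using finite_graph by (rule finite_strand_ends)
    show "sym (?RA \<union> ?RB)"
      using inside.line_involutive outside.line_involutive by (intro sym_Un strand_rel_sym)
  qed (use external_in part_subset in \<open>auto simp: strand_rel_def UNIV_slot\<close>)
  also have "\<dots> = card (strand_ends S // ?RA\<^sup>*) + card (strand_ends (V - S) // ?RB\<^sup>*)"
    unfolding ends using finite_strand_ends inside.finite_part outside.finite_part strand_rel_subset
    by (intro card_quotient_Un_disjoint) auto
  finally show ?thesis
    by (simp add: UNIV_slot)
qed

lemma degree_cut:
  "degree V L = degree (V - S) (L(L p := L m, L m := L p)) + degree S (L(p := m, m := p))"
proof -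
  have "real (card V) = real (card S) + real (card (V - S))"
    using finite_graph part_subset by (metis card_Diff_subset card_mono finite_subset
        le_add_diff_inverse of_nat_add)
  moreover have "real (card (faces V L)) + 3 =
      real (card (faces S (L(p := m, m := p)))) + real (card (faces (V - S) (L(L p := L m, L m := L p))))"
    unfolding inside.faces_rejoin outside.faces_rejoin using arg_cong[OF card_faces_cut, of real] by simp
  ultimately show ?thesis
    using finite_graph inside.finite_part outside.finite_part by (simp add: degree_eq_faces field_simps)
qed

end

theorem mainTheorem1:
  fixes V S :: "'v set" and L :: "'v \<times> hl \<Rightarrow> 'v \<times> hl"
  assumes "vacuum_graph V L"
    and "two_point_subgraph V L S"
  shows "degree V L = degree (V - S) (contract_lines S L) + degree S (close_lines S L)"
proof -
  obtain p m where ext: "ext_half_lines S L = {p, m}" and signs: "plus_hl (snd p)" "\<not> plus_hl (snd m)"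
    using assms(2) unfolding two_point_subgraph_def by blast
  interpret two_point_cut V S L p m
    using assms ext unfolding vacuum_graph_def two_point_subgraph_def by unfold_locales auto
  have "ext_plus S L = p" "ext_minus S L = m"
    using ext signs unfolding ext_plus_def ext_minus_def by auto
  then have "close_lines S L = L(p := m, m := p)" "contract_lines S L = L(L p := L m, L m := L p)"
    using signs unfolding close_lines_def contract_lines_def Let_def by (auto simp: fun_eq_iff)
  then show ?thesis
    using degree_cut by simp
qed

end
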